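(* Let $G=(V,E)$ be a 4-regular 4-edge-connected graph, let $T$ be a spanning tree of $G$ with no vertex of degree four, rooted at a leaf $r$ of $T$, and let $L=E\setminus T$. Let $G'=(V',E')$, $T'$ and $L'=E'\setminus T'$ be the subdivided graph, tree and links. Then: (1) for any $F'\subseteq L'$ such that $T'+F'$ is 2-edge-connected, $T+F$ is 2-vertex-connected, where $F\subseteq L$ is the set of links corresponding to $F'$; and (2) for every edge $e'\in T'$ there are at least two links $\ell'_1,\ell'_2\in L'$ whose paths in $T'$ contain $e'$.
   Context: For a link $\ell\in L$, $P_\ell$ denotes the path in $T$ between the endpoints of $\ell$. The subdivided graph $G'$ is obtained from $G$ as follows: each tree edge $e=uw\in T$ is subdivided into two edges $uv_e$ and $v_ew$ with a new vertex $v_e$, and $T'$ consists of all these edges. For each link $\ell\in L$ a link $\ell'\in L'$ is created: for each endpoint $u$ of $\ell$, if $u$ is the root or a leaf of $T$ then $u$ is an endpoint of $\ell'$; if $u$ is an internal vertex of $T$, let $e$ be the (unique) edge of $P_\ell$ incident to $u$, and then $v_e$ is an endpoint of $\ell'$. This gives a bijection $\ell\leftrightarrow\ell'$ between $L$ and $L'$, and for $F'\subseteq L'$, $F$ denotes the corresponding subset of $L$. $T+F$ denotes the graph $(V,T\cup F)$. *)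

theory Defs
  imports Main
begin

definition graph :: "'a set \<Rightarrow> 'a set set \<Rightarrow> bool" where
  "graph V E \<longleftrightarrow> finite V \<and> (\<forall>e\<in>E. \<exists>u w. u \<in> V \<and> w \<in> V \<and> u \<noteq> w \<and> e = {u, w})"

definition degree :: "'a set set \<Rightarrow> 'a \<Rightarrow> nat" where
  "degree E v = card {e \<in> E. v \<in> e}"

definition adj_rel :: "'a set set \<Rightarrow> ('a \<times> 'a) set" where
  "adj_rel E = {(x, y). {x, y} \<in> E}"

definition connected_graph :: "'a set \<Rightarrow> 'a set set \<Rightarrow> bool" where
  "connected_graph V E \<longleftrightarrow>
     (\<forall>u\<in>V. \<forall>w\<in>V. (u, w) \<in> (adj_rel {e \<in> E. e \<subseteq> V})\<^sup>*)"

definition k_edge_connected :: "nat \<Rightarrow> 'a set \<Rightarrow> 'a set set \<Rightarrow> bool" where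
  "k_edge_connected k V E \<longleftrightarrow>
     (\<forall>D \<subseteq> E. card D < k \<longrightarrow> connected_graph V (E - D))"

definition k_vertex_connected :: "nat \<Rightarrow> 'a set \<Rightarrow> 'a set set \<Rightarrow> bool" where
  "k_vertex_connected k V E \<longleftrightarrow> card V > k \<and>
     (\<forall>X \<subseteq> V. card X < k \<longrightarrow> connected_graph (V - X) {e \<in> E. e \<inter> X = {}})"

definition is_path :: "'a set set \<Rightarrow> 'a \<Rightarrow> 'a \<Rightarrow> 'a list \<Rightarrow> bool" where
  "is_path E u w p \<longleftrightarrow> p \<noteq> [] \<and> hd p = u \<and> last p = w \<and> distinct p \<and>
     (\<forall>i. Suc i < length p \<longrightarrow> {p ! i, p ! Suc i} \<in> E)"

definition path_edges :: "'a list \<Rightarrow> 'a set set" where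
  "path_edges p = {{p ! i, p ! Suc i} | i. Suc i < length p}"

definition acyclic_graph :: "'a set set \<Rightarrow> bool" where
  "acyclic_graph E \<longleftrightarrow> \<not> (\<exists>p. length p \<ge> 3 \<and> distinct p \<and>
     (\<forall>i. Suc i < length p \<longrightarrow> {p ! i, p ! Suc i} \<in> E) \<and> {last p, hd p} \<in> E)"

definition is_tree :: "'a set \<Rightarrow> 'a set set \<Rightarrow> bool" where
  "is_tree V T \<longleftrightarrow> graph V T \<and> connected_graph V T \<and> acyclic_graph T"

definition spanning_tree :: "'a set \<Rightarrow> 'a set set \<Rightarrow> 'a set set \<Rightarrow> bool" where
  "spanning_tree V E T \<longleftrightarrow> T \<subseteq> E \<and> is_tree V T"

definition tree_path :: "'a set set \<Rightarrow> 'a \<Rightarrow> 'a \<Rightarrow> 'a list" where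
  "tree_path T u w = (THE p. is_path T u w p)"

text \<open>Edges of P_l, the tree path between the endpoints of a link l.\<close>
definition link_path :: "'a set set \<Rightarrow> 'a set \<Rightarrow> 'a set set" where
  "link_path T l = (\<Union>u\<in>l. \<Union>w\<in>l. if u \<noteq> w then path_edges (tree_path T u w) else {})"

text \<open>Subdivision: original vertices are Inl v, the subdivision vertex v_e of
tree edge e is Inr e.\<close>
definition sub_vertices :: "'a set \<Rightarrow> 'a set set \<Rightarrow> ('a + 'a set) set" where
  "sub_vertices V T = Inl ` V \<union> Inr ` T"

definition sub_tree :: "'a set set \<Rightarrow> ('a + 'a set) set set" where
  "sub_tree T = {{Inl u, Inr e} | u e. e \<in> T \<and> u \<in> e}"

text \<open>Endpoint of l' corresponding to endpoint u of link l (tree T, root r).\<close>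
definition sub_end :: "'a set set \<Rightarrow> 'a \<Rightarrow> 'a set \<Rightarrow> 'a \<Rightarrow> 'a + 'a set" where
  "sub_end T r l u =
     (if u = r \<or> degree T u = 1 then Inl u
      else Inr (THE e. e \<in> link_path T l \<and> u \<in> e))"

definition sub_link :: "'a set set \<Rightarrow> 'a \<Rightarrow> 'a set \<Rightarrow> ('a + 'a set) set" where
  "sub_link T r l = sub_end T r l ` l"

end

theory Submission
  imports Defs
begin

text \<open>
  Part (2). For a tree edge \<open>e = ux\<close> let \<open>S\<close> be the vertex set of the component of \<open>u\<close> in
  \<open>T - e\<close>. The edge \<open>{u, v\<^sub>e}\<close> of \<open>T'\<close> lies on the path of the image \<open>l'\<close> of every link \<open>l\<close>
  leaving \<open>S\<close>, unless \<open>u\<close> is an internal vertex of \<open>T\<close> and an endpoint of \<open>l\<close>. By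
  4-edge-connectivity at least four edges leave \<open>S\<close>, and if \<open>u\<close> is a leaf or the root, at least
  three of them are links. Otherwise \<open>u\<close> has a second tree edge into \<open>S\<close>, so at least four edges
  also leave \<open>S - u\<close>; as only four edges meet \<open>u\<close>, at least two links avoiding \<open>u\<close> leave \<open>S\<close>.
  Distinct links have distinct images.

  Part (1). If \<open>T + F - v\<close> were disconnected, each of its components would contain a tree
  neighbour of \<open>v\<close>. Since \<open>v\<close> has at most three of them, and only one if it is a leaf or the
  root, some component contains exactly one, \<open>y\<close>. That component, lifted to the subdivision,
  is left only through the edge \<open>{v, v\<^sub>e}\<close>, \<open>e = vy\<close>, of \<open>T' + F'\<close>.
\<close>

section \<open>Reachability and paths\<close>

definition reach :: "'a set set \<Rightarrow> 'a \<Rightarrow> 'a \<Rightarrow> bool" where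
  "reach E a b \<longleftrightarrow> (a, b) \<in> (adj_rel E)\<^sup>*"

definition all_edges_bridges :: "'a set set \<Rightarrow> bool" where
  "all_edges_bridges E \<longleftrightarrow> (\<forall>x y. {x, y} \<in> E \<longrightarrow> x \<noteq> y \<longrightarrow> \<not> reach (E - {{x, y}}) x y)"

definition cut_edges :: "'a set set \<Rightarrow> 'a set \<Rightarrow> 'a set set" where
  "cut_edges E W = {f \<in> E. f \<inter> W \<noteq> {} \<and> \<not> f \<subseteq> W}"

lemma reach_refl [simp]: "reach E a a"
  by (simp add: reach_def)

lemma reach_edge: "{a, b} \<in> E \<Longrightarrow> reach E a b"
  by (auto simp: reach_def adj_rel_def)

lemma reach_trans: "reach E a b \<Longrightarrow> reach E b c \<Longrightarrow> reach E a c"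
  unfolding reach_def by (rule rtrancl_trans)

lemma reach_sym: "reach E a b \<Longrightarrow> reach E b a"
proof -
  have "sym (adj_rel E)"
    by (auto simp: sym_def adj_rel_def insert_commute)
  then show "reach E a b \<Longrightarrow> reach E b a"
    unfolding reach_def by (metis rtrancl_converseD sym_conv_converse_eq sym_rtrancl)
qed

lemma reach_mono: "reach E a b \<Longrightarrow> E \<subseteq> E' \<Longrightarrow> reach E' a b"
proof -
  assume "reach E a b" "E \<subseteq> E'"
  have "adj_rel E \<subseteq> adj_rel E'" using \<open>E \<subseteq> E'\<close> by (auto simp: adj_rel_def)
  then show ?thesis using \<open>reach E a b\<close> unfolding reach_def
    by (meson rtrancl_mono subsetD)
qed

lemma reach_closed:
  assumes "reach E a b" "a \<in> S" "\<And>x y. x \<in> S \<Longrightarrow> {x, y} \<in> E \<Longrightarrow> y \<in> S"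
  shows "b \<in> S"
  using assms(1)[unfolded reach_def] assms(2)
  by (induction rule: rtrancl_induct) (auto simp: adj_rel_def intro: assms(3))

lemma connected_graph_iff_reach:
  "connected_graph V E \<longleftrightarrow> (\<forall>u\<in>V. \<forall>w\<in>V. reach {e \<in> E. e \<subseteq> V} u w)"
  by (simp add: connected_graph_def reach_def)

lemma path_edges_Nil [simp]: "path_edges [] = {}"
  and path_edges_single [simp]: "path_edges [x] = {}"
  by (simp_all add: path_edges_def)

lemma path_edges_Cons2 [simp]: "path_edges (x # y # zs) = insert {x, y} (path_edges (y # zs))"
proof (rule set_eqI)
  fix f
  show "f \<in> path_edges (x # y # zs) \<longleftrightarrow> f \<in> insert {x, y} (path_edges (y # zs))"
  proof
    assume "f \<in> path_edges (x # y # zs)"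
    then obtain i where i: "f = {(x # y # zs) ! i, (x # y # zs) ! Suc i}" "Suc i < length (x # y # zs)"
      by (auto simp: path_edges_def)
    show "f \<in> insert {x, y} (path_edges (y # zs))"
    proof (cases i)
      case 0 then show ?thesis using i by simp
    next
      case (Suc j) then show ?thesis using i by (auto simp: path_edges_def)
    qed
  next
    assume "f \<in> insert {x, y} (path_edges (y # zs))"
    then show "f \<in> path_edges (x # y # zs)"
    proof
      assume "f = {x, y}" then show ?thesis unfolding path_edges_def
        by (intro CollectI exI[of _ 0]) simp
    next
      assume "f \<in> path_edges (y # zs)"
      then obtain i where i: "f = {(y # zs) ! i, (y # zs) ! Suc i}" "Suc i < length (y # zs)"
        by (auto simp: path_edges_def)
      then show ?thesis unfolding path_edges_def
        by (intro CollectI exI[of _ "Suc i"]) simp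
    qed
  qed
qed

lemma consecutive_edges_iff_path_edges:
  "(\<forall>i. Suc i < length p \<longrightarrow> {p ! i, p ! Suc i} \<in> E) \<longleftrightarrow> path_edges p \<subseteq> E"
  by (auto simp: path_edges_def)

lemma is_path_iff:
  "is_path E u w p \<longleftrightarrow> p \<noteq> [] \<and> hd p = u \<and> last p = w \<and> distinct p \<and> path_edges p \<subseteq> E"
  unfolding is_path_def consecutive_edges_iff_path_edges ..

lemma path_edges_subset_set: "f \<in> path_edges p \<Longrightarrow> f \<subseteq> set p"
  by (induction p rule: induct_list012) auto

lemma reach_hd_last: "path_edges p \<subseteq> E \<Longrightarrow> p \<noteq> [] \<Longrightarrow> reach E (hd p) (last p)"
  by (induction p rule: induct_list012) (auto intro: reach_trans reach_edge)

lemma is_path_Cons2_iff: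
  "is_path E u w (a # z # ps) \<longleftrightarrow>
     a = u \<and> {u, z} \<in> E \<and> u \<notin> set (z # ps) \<and> is_path E z w (z # ps)"
  by (auto simp: is_path_iff)

lemma reach_along_path: "is_path E u w p \<Longrightarrow> path_edges p \<subseteq> E' \<Longrightarrow> reach E' u w"
  unfolding is_path_iff using reach_hd_last by blast

lemma path_edges_avoid: "a \<notin> set p \<Longrightarrow> f \<in> path_edges p \<Longrightarrow> a \<notin> f"
  using path_edges_subset_set by blast

lemma path_edges_append: "path_edges ys \<subseteq> path_edges (xs @ ys)"
proof (induction xs)
  case (Cons x xs)
  then show ?case by (cases "xs @ ys") auto
qed simp

lemma reach_imp_path:
  assumes "reach E u w"
  obtains p where "is_path E u w p"
proof -
  have "\<exists>p. is_path E u w p"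
    using assms[unfolded reach_def]
  proof (induction rule: converse_rtrancl_induct)
    case base
    show ?case by (rule exI[of _ "[w]"]) (simp add: is_path_iff)
  next
    case (step y z)
    then obtain p where p: "is_path E z w p" by blast
    show ?case
    proof (cases "y \<in> set p")
      case True
      then obtain xs ys where "p = xs @ y # ys" by (meson split_list)
      then show ?thesis using p path_edges_append[of "y # ys" xs]
        by (intro exI[of _ "y # ys"]) (auto simp: is_path_iff)
    next
      case False
      then show ?thesis using p step(1)
        by (intro exI[of _ "y # p"]) (cases p, auto simp: is_path_iff adj_rel_def)
    qed
  qed
  then show thesis using that by blast
qed

lemma acyclic_all_edges_bridges:
  assumes "acyclic_graph E"
  shows "all_edges_bridges E"
  unfolding all_edges_bridges_def
proof (intro allI impI notI)
  fix x y
  assume xy: "{x, y} \<in> E" "x \<noteq> y" and "reach (E - {{x, y}}) x y"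
  then obtain q where q: "is_path (E - {{x, y}}) x y q"
    by (blast elim: reach_imp_path)
  then obtain z q' where z: "q = x # z # q'"
    using xy(2) unfolding is_path_iff by (metis hd_Cons_tl last_ConsL list.exhaust)
  have "q' \<noteq> []"
    using q z by (auto simp: is_path_iff)
  then have "length q \<ge> 3" using z by (cases q') auto
  moreover have "path_edges q \<subseteq> E" "{last q, hd q} \<in> E" "distinct q"
    using q xy by (auto simp: is_path_iff insert_commute)
  ultimately show False
    using assms unfolding acyclic_graph_def consecutive_edges_iff_path_edges by blast
qed

text \<open>Otherwise the first edge of one path is not a bridge: the other path avoids it.\<close>
lemma same_first_edge:
  assumes bridges: "all_edges_bridges E"
    and p: "is_path E a w (a # z # ps)" and q: "is_path E a w (a # z' # qs)"
  shows "z' = z"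
proof (rule ccontr)
  assume "z' \<noteq> z"
  let ?E = "E - {{a, z}}"
  have az: "a \<noteq> z" "{a, z} \<in> E" "a \<notin> set (z # ps)" "a \<notin> set (z' # qs)"
    and p': "is_path E z w (z # ps)" and q': "is_path E z' w (z' # qs)"
    using p q by (auto simp: is_path_Cons2_iff)
  have "path_edges (z # ps) \<subseteq> ?E"
    using p' path_edges_avoid[OF az(3)] by (auto simp: is_path_iff)
  then have "reach ?E z w" by (rule reach_along_path[OF p'])
  have "{a, z'} \<noteq> {a, z}" using \<open>z' \<noteq> z\<close> az(1) by (auto simp: doubleton_eq_iff)
  then have "path_edges (a # z' # qs) \<subseteq> ?E"
    using q path_edges_avoid[OF az(4)] by (auto simp: is_path_iff)
  then have "reach ?E a w" by (rule reach_along_path[OF q])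
  with \<open>reach ?E z w\<close> have "reach ?E a z" by (metis reach_sym reach_trans)
  then show False using bridges az unfolding all_edges_bridges_def by blast
qed

lemma path_unique:
  assumes "all_edges_bridges E"
  shows "is_path E u w p \<Longrightarrow> is_path E u w q \<Longrightarrow> p = q"
proof (induction p arbitrary: u q rule: induct_list012)
  case 1
  then show ?case by (simp add: is_path_iff)
next
  case (2 a)
  then show ?case by (cases q) (auto simp: is_path_iff, metis last_in_set)
next
  case (3 a z ps)
  then have p: "a = u" "a \<notin> set (z # ps)" "is_path E z w (z # ps)"
    by (auto simp: is_path_Cons2_iff)
  then have "u \<noteq> w" by (metis is_path_iff last_in_set)
  then obtain z' qs where q: "q = a # z' # qs"
    using 3(4) p(1) unfolding is_path_iff by (metis hd_Cons_tl last_ConsL list.exhaust)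
  then have "z' = z" using same_first_edge[OF assms] 3(3,4) p(1) by metis
  then have "is_path E z w (z # qs)" using 3(4) q by (simp add: is_path_Cons2_iff)
  then show ?case using 3(2)[OF p(3)] q \<open>z' = z\<close> by simp
qed

lemma path_edges_eq_separating:
  assumes "all_edges_bridges E"
  shows "is_path E u w p \<Longrightarrow> path_edges p = {f \<in> E. \<not> reach (E - {f}) u w}"
proof (induction p arbitrary: u rule: induct_list012)
  case 1 then show ?case by (simp add: is_path_iff)
next
  case (2 x)
  then show ?case by (auto simp: is_path_iff)
next
  case (3 a z ps)
  then have az: "a = u" "a \<noteq> z" "{a, z} \<in> E" "a \<notin> set (z # ps)"
    and p: "is_path E z w (z # ps)"
    by (auto simp: is_path_Cons2_iff)
  have IH: "path_edges (z # ps) = {f \<in> E. \<not> reach (E - {f}) z w}"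
    using 3(2) p .
  have first: "\<not> reach (E - {{a, z}}) a w"
  proof
    assume "reach (E - {{a, z}}) a w"
    moreover have "path_edges (z # ps) \<subseteq> E - {{a, z}}"
      using p path_edges_avoid[OF az(4)] by (auto simp: is_path_iff)
    then have "reach (E - {{a, z}}) z w" by (rule reach_along_path[OF p])
    ultimately have "reach (E - {{a, z}}) a z" by (metis reach_sym reach_trans)
    then show False using assms az unfolding all_edges_bridges_def by blast
  qed
  have later: "reach (E - {f}) a w \<longleftrightarrow> reach (E - {f}) z w" if "f \<in> path_edges (z # ps)" for f
  proof -
    have "a \<notin> f" using az(4) that by (rule path_edges_avoid)
    then have "reach (E - {f}) a z" using az(3) by (auto intro: reach_edge)
    then show ?thesis by (metis reach_sym reach_trans)
  qed
  have outside: "reach (E - {f}) a w" if "f \<notin> path_edges (a # z # ps)" for f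
    using reach_along_path[OF 3(3), of "E - {f}"] 3(3) that az(1) by (auto simp: is_path_iff)
  show ?case
  proof (rule set_eqI)
    fix f
    show "f \<in> path_edges (a # z # ps) \<longleftrightarrow> f \<in> {f \<in> E. \<not> reach (E - {f}) u w}"
      using first later outside[of f] az(1,3) IH by auto
  qed
qed

lemma is_path_tree_path:
  assumes "all_edges_bridges E" "reach E a b"
  shows "is_path E a b (tree_path E a b)"
proof -
  obtain p where "is_path E a b p" using assms(2) by (rule reach_imp_path)
  then have "\<exists>!p. is_path E a b p" using path_unique[OF assms(1)] by blast
  then show ?thesis unfolding tree_path_def by (rule theI')
qed

lemma path_edges_tree_path:
  assumes "all_edges_bridges E" "reach E a b"
  shows "path_edges (tree_path E a b) = {f \<in> E. \<not> reach (E - {f}) a b}"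
  using path_edges_eq_separating[OF assms(1) is_path_tree_path[OF assms]] .

lemma link_path_eq_separating:
  assumes "all_edges_bridges E" "reach E a b" "a \<noteq> b"
  shows "link_path E {a, b} = {f \<in> E. \<not> reach (E - {f}) a b}"
proof -
  have sym: "{f \<in> E. \<not> reach (E - {f}) b a} = {f \<in> E. \<not> reach (E - {f}) a b}"
    by (auto dest: reach_sym)
  have "link_path E {a, b} = path_edges (tree_path E a b) \<union> path_edges (tree_path E b a)"
    using assms(3) by (auto simp: link_path_def)
  then show ?thesis
    using path_edges_tree_path[OF assms(1,2)] path_edges_tree_path[OF assms(1) reach_sym[OF assms(2)]] sym
    by simp
qed

lemma link_path_first_edge:
  assumes "all_edges_bridges E" "reach E a b" "a \<noteq> b"
  obtains z where "{a, z} \<in> E" "a \<noteq> z" "reach {f \<in> E. a \<notin> f} z b"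
    "{g \<in> link_path E {a, b}. a \<in> g} = {{a, z}}"
proof -
  let ?p = "tree_path E a b"
  have P: "is_path E a b ?p" "path_edges ?p = {f \<in> E. \<not> reach (E - {f}) a b}"
    using is_path_tree_path[OF assms(1,2)] path_edges_tree_path[OF assms(1,2)] by auto
  obtain z ps where zp: "?p = a # z # ps" using P(1) assms(3) unfolding is_path_iff
    by (metis hd_Cons_tl last_ConsL list.exhaust)
  have az: "{a, z} \<in> E" "a \<notin> set (z # ps)" "is_path E z b (z # ps)"
    using P(1) zp by (auto simp: is_path_Cons2_iff)
  have "path_edges (z # ps) \<subseteq> {f \<in> E. a \<notin> f}"
    using az(3) path_edges_avoid[OF az(2)] by (auto simp: is_path_iff)
  then have "reach {f \<in> E. a \<notin> f} z b" by (rule reach_along_path[OF az(3)])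
  moreover have "link_path E {a, b} = insert {a, z} (path_edges (z # ps))"
    using link_path_eq_separating[OF assms] P(2) zp by simp
  then have "{g \<in> link_path E {a, b}. a \<in> g} = {{a, z}}"
    using path_edges_avoid[OF az(2)] by auto
  moreover have "a \<noteq> z" using az(2) by simp
  ultimately show thesis using that az(1) by blast
qed

lemma card_cut_edges_ge:
  assumes "k_edge_connected k V E" "W \<subseteq> V" "s \<in> W" "t \<in> V" "t \<notin> W"
  shows "k \<le> card (cut_edges E W)"
proof (rule ccontr)
  assume "\<not> k \<le> card (cut_edges E W)"
  then have "connected_graph V (E - cut_edges E W)"
    using assms(1) by (simp add: k_edge_connected_def cut_edges_def)
  then have "reach {e \<in> E - cut_edges E W. e \<subseteq> V} s t"
    using assms(2-4) by (auto simp: connected_graph_iff_reach)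
  then have "reach (E - cut_edges E W) s t" by (rule reach_mono) auto
  then have "t \<in> W"
    by (rule reach_closed) (use assms(3) in \<open>auto simp: cut_edges_def\<close>)
  then show False using assms(5) by simp
qed

section \<open>A spanning tree and its subdivision\<close>

locale tree_in_graph =
  fixes V :: "'a set" and E T :: "'a set set" and r :: 'a
  assumes graph: "graph V E"
    and spanning: "spanning_tree V E T"
begin

lemma finite_V: "finite V"
  using graph by (simp add: graph_def)

lemma edge_E:
  assumes "e \<in> E"
  obtains u w where "u \<in> V" "w \<in> V" "u \<noteq> w" "e = {u, w}"
  using graph assms by (auto simp: graph_def)

lemma T_subset_E: "T \<subseteq> E"
  using spanning by (simp add: spanning_tree_def)

lemma edge_T:
  assumes "e \<in> T"
  obtains u w where "u \<in> V" "w \<in> V" "u \<noteq> w" "e = {u, w}"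
  using T_subset_E assms by (blast elim: edge_E)

lemma edge_subset_V: "e \<in> E \<Longrightarrow> e \<subseteq> V"
  by (auto elim: edge_E)

lemma finite_E: "finite E"
  using finite_V edge_subset_V by (meson Pow_iff finite_Pow_iff finite_subset subsetI)

lemma finite_T: "finite T"
  using finite_E T_subset_E by (rule rev_finite_subset)

lemma all_edges_bridges_T: "all_edges_bridges T"
  using spanning by (intro acyclic_all_edges_bridges) (simp add: spanning_tree_def is_tree_def)

lemma reach_T: "a \<in> V \<Longrightarrow> b \<in> V \<Longrightarrow> reach T a b"
  using spanning unfolding spanning_tree_def is_tree_def connected_graph_iff_reach
  by (blast intro: reach_mono)

lemma other_end:
  assumes "e \<in> T" "u \<in> e"
  obtains x where "e = {u, x}" "u \<noteq> x" "x \<in> V" "u \<in> V"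
  using assms by (elim edge_T) (auto simp: insert_commute)

lemma tree_edge_separates:
  assumes "{p, q} \<in> T" "v \<in> V" "p \<in> V"
  shows "reach (T - {{p, q}}) v p \<or> reach (T - {{p, q}}) v q"
proof -
  have "(v, p) \<in> (adj_rel T)\<^sup>*" using reach_T[OF assms(2,3)] by (simp add: reach_def)
  then show ?thesis
  proof (induction rule: converse_rtrancl_induct)
    case (step y y')
    then have "{y, y'} \<in> T" by (simp add: adj_rel_def)
    show ?case
    proof (cases "{y, y'} = {p, q}")
      case True
      then show ?thesis by (auto simp: doubleton_eq_iff)
    next
      case False
      then have "reach (T - {{p, q}}) y y'" using \<open>{y, y'} \<in> T\<close> by (intro reach_edge) simp
      then show ?thesis using step.IH by (metis reach_trans)
    qed
  qed simp
qed

lemma card_tree_neighbours_le_degree: "card {z. {v, z} \<in> T} \<le> degree T v"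
proof -
  have "inj_on (\<lambda>z. {v, z}) {z. {v, z} \<in> T}"
    by (rule inj_onI) (auto simp: doubleton_eq_iff elim: edge_T)
  then show ?thesis
    unfolding degree_def using finite_T by (intro card_inj_on_le) auto
qed

lemma finite_tree_neighbours: "finite {z. {v, z} \<in> T}"
proof (rule finite_subset)
  show "{z. {v, z} \<in> T} \<subseteq> V" using T_subset_E edge_subset_V by blast
qed (rule finite_V)

lemma tree_neighbour_reach:
  assumes "v \<in> V" "x \<in> V" "x \<noteq> v"
  obtains z where "{v, z} \<in> T" "reach {f \<in> T. v \<notin> f} x z"
proof -
  obtain z where "{v, z} \<in> T" "reach {f \<in> T. v \<notin> f} z x"
    using link_path_first_edge[OF all_edges_bridges_T reach_T[OF assms(1,2)]] assms(3) by metis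
  then show thesis using that by (blast dest: reach_sym)
qed

definition leaf_or_root :: "'a \<Rightarrow> bool" where
  "leaf_or_root a \<longleftrightarrow> a = r \<or> degree T a = 1"

lemma sub_end_leaf_or_root: "leaf_or_root a \<Longrightarrow> sub_end T r l a = Inl a"
  by (simp add: sub_end_def leaf_or_root_def)

lemma sub_end_inner:
  assumes "\<not> leaf_or_root a" "a \<in> V" "b \<in> V" "a \<noteq> b"
  obtains z where "sub_end T r {a, b} a = Inr {a, z}" "{a, z} \<in> T" "a \<noteq> z"
    "reach {f \<in> T. a \<notin> f} z b" "\<not> reach (T - {{a, z}}) a b"
proof -
  have rab: "reach T a b" using reach_T assms by simp
  obtain z where z: "{a, z} \<in> T" "a \<noteq> z" "reach {f \<in> T. a \<notin> f} z b"
    "{g \<in> link_path T {a, b}. a \<in> g} = {{a, z}}"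
    using link_path_first_edge[OF all_edges_bridges_T rab assms(4)] by blast
  have "(THE g. g \<in> link_path T {a, b} \<and> a \<in> g) = {a, z}"
    using z(4) by (intro the_equality) blast+
  then have "sub_end T r {a, b} a = Inr {a, z}"
    using assms(1) by (simp add: sub_end_def leaf_or_root_def)
  moreover have "\<not> reach (T - {{a, z}}) a b"
    using z(4) link_path_eq_separating[OF all_edges_bridges_T rab assms(4)] by blast
  ultimately show thesis using that z by blast
qed

lemma sub_end_in_sub_vertices:
  assumes "a \<in> V" "b \<in> V" "a \<noteq> b"
  shows "sub_end T r {a, b} a \<in> sub_vertices V T"
proof (cases "leaf_or_root a")
  case True
  then show ?thesis using assms by (simp add: sub_end_leaf_or_root sub_vertices_def)
next
  case False
  then show ?thesis using assms by (elim sub_end_inner) (auto simp: sub_vertices_def)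
qed

lemma sub_tree_edge_iff:
  "{X, Y} \<in> sub_tree T \<longleftrightarrow> (\<exists>u e. e \<in> T \<and> u \<in> e \<and>
     ((X = Inl u \<and> Y = Inr e) \<or> (X = Inr e \<and> Y = Inl u)))"
  by (auto simp: sub_tree_def doubleton_eq_iff)

definition tree_side :: "'a set \<Rightarrow> 'a \<Rightarrow> 'a set" where
  "tree_side e u = {s. reach (T - {e}) u s}"

definition sub_side :: "'a set \<Rightarrow> 'a \<Rightarrow> ('a + 'a set) set" where
  "sub_side e u = Inl ` tree_side e u \<union> Inr ` {f \<in> T. f \<subseteq> tree_side e u}"

lemma in_tree_side_self [simp]: "u \<in> tree_side e u"
  by (simp add: tree_side_def)

lemma tree_side_step:
  assumes "{p, q} \<in> T" "{p, q} \<noteq> e" "p \<in> tree_side e u"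
  shows "q \<in> tree_side e u"
proof -
  have "reach (T - {e}) p q" using assms(1,2) by (intro reach_edge) simp
  then show ?thesis using assms(3) by (auto simp: tree_side_def intro: reach_trans)
qed

lemma other_end_notin_tree_side:
  assumes "{u, x} \<in> T" "u \<noteq> x"
  shows "x \<notin> tree_side {u, x} u"
  using all_edges_bridges_T assms unfolding tree_side_def all_edges_bridges_def by blast

lemma tree_side_subset_V:
  assumes "u \<in> V"
  shows "tree_side e u \<subseteq> V"
proof
  fix s assume "s \<in> tree_side e u"
  then have "reach (T - {e}) u s" by (simp add: tree_side_def)
  then show "s \<in> V"
    by (rule reach_closed) (use assms T_subset_E edge_subset_V in blast)+
qed

lemma tree_edge_leaving_side:
  assumes "f \<in> T" "f \<inter> tree_side e u \<noteq> {}" "\<not> f \<subseteq> tree_side e u"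
  shows "f = e"
proof -
  obtain p q where "f = {p, q}" "p \<in> tree_side e u" "q \<notin> tree_side e u"
    using assms by (elim edge_T) (auto simp: insert_commute)
  then show ?thesis using tree_side_step assms(1) by blast
qed

lemma sub_side_closed:
  assumes e: "e \<in> T" "u \<in> e"
    and X: "X \<in> sub_side e u" and R: "reach (sub_tree T - {{Inl u, Inr e}}) X Y"
  shows "Y \<in> sub_side e u"
proof -
  obtain x where x: "e = {u, x}" "u \<noteq> x" using other_end e by blast
  have xS: "x \<notin> tree_side e u" using other_end_notin_tree_side e x by blast
  show ?thesis
  proof (rule reach_closed[OF R X])
    fix A B assume A: "A \<in> sub_side e u" and AB: "{A, B} \<in> sub_tree T - {{Inl u, Inr e}}"
    then obtain s f where sf: "f \<in> T" "s \<in> f" "(A = Inl s \<and> B = Inr f) \<or> (A = Inr f \<and> B = Inl s)"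
      using sub_tree_edge_iff by blast
    from sf(3) show "B \<in> sub_side e u"
    proof
      assume AB': "A = Inl s \<and> B = Inr f"
      then have sS: "s \<in> tree_side e u" using A by (auto simp: sub_side_def)
      have "f \<noteq> e"
      proof
        assume "f = e"
        then have "s = u" using sf sS xS x by auto
        then show False using AB AB' \<open>f = e\<close> by simp
      qed
      obtain t where "f = {s, t}" using other_end sf by blast
      then show ?thesis using AB' sf sS tree_side_step \<open>f \<noteq> e\<close> by (auto simp: sub_side_def)
    next
      assume "A = Inr f \<and> B = Inl s"
      then show ?thesis using A sf by (auto simp: sub_side_def)
    qed
  qed
qed

lemma all_edges_bridges_sub_tree: "all_edges_bridges (sub_tree T)"
  unfolding all_edges_bridges_def
proof (intro allI impI)
  fix X Y assume "{X, Y} \<in> sub_tree T" "X \<noteq> Y"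
  then obtain u e where ue: "e \<in> T" "u \<in> e" "(X = Inl u \<and> Y = Inr e) \<or> (X = Inr e \<and> Y = Inl u)"
    using sub_tree_edge_iff by blast
  obtain x where x: "e = {u, x}" "u \<noteq> x" using other_end ue by blast
  have "Inr e \<notin> sub_side e u" using other_end_notin_tree_side ue x by (auto simp: sub_side_def)
  moreover have "Inl u \<in> sub_side e u" by (simp add: sub_side_def)
  ultimately have "\<not> reach (sub_tree T - {{Inl u, Inr e}}) (Inl u) (Inr e)"
    using sub_side_closed[OF ue(1,2)] by blast
  then show "\<not> reach (sub_tree T - {{X, Y}}) X Y"
    using ue(3) by (auto simp: insert_commute dest: reach_sym)
qed

lemma reach_sub_tree:
  assumes "X \<in> sub_vertices V T" "Y \<in> sub_vertices V T"
  shows "reach (sub_tree T) X Y"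
proof -
  have Inl: "reach (sub_tree T) (Inl a) (Inl b)" if "a \<in> V" "b \<in> V" for a b
  proof -
    have "(a, b) \<in> (adj_rel T)\<^sup>*" using reach_T[OF that] by (simp add: reach_def)
    then show ?thesis
    proof (induction rule: rtrancl_induct)
      case (step y z)
      then have "{Inl y, Inr {y, z}} \<in> sub_tree T" "{Inr {y, z}, Inl z} \<in> sub_tree T"
        by (auto simp: sub_tree_def adj_rel_def insert_commute)
      then show ?case using step.IH by (metis reach_edge reach_trans)
    qed simp
  qed
  have to_Inl: "\<exists>a\<in>V. reach (sub_tree T) Z (Inl a)" if "Z \<in> sub_vertices V T" for Z
    using that unfolding sub_vertices_def
  proof
    assume "Z \<in> Inr ` T"
    then obtain f where f: "f \<in> T" "Z = Inr f" by blast
    then obtain a b where "a \<in> V" "f = {a, b}" by (elim edge_T) blast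
    then have "{Z, Inl a} \<in> sub_tree T" using f by (auto simp: sub_tree_def insert_commute)
    then show ?thesis using \<open>a \<in> V\<close> by (meson reach_edge)
  qed (auto intro: bexI[of _ _ V] reach_refl)
  obtain a b where "a \<in> V" "b \<in> V" "reach (sub_tree T) X (Inl a)" "reach (sub_tree T) Y (Inl b)"
    using to_Inl assms by blast
  then show ?thesis using Inl by (metis reach_sym reach_trans)
qed

lemma sub_end_eq_Inl_iff:
  assumes "a \<in> V" "b \<in> V" "a \<noteq> b"
  shows "sub_end T r {a, b} a = Inl c \<longleftrightarrow> leaf_or_root a \<and> c = a"
proof (cases "leaf_or_root a")
  case True
  then show ?thesis by (auto simp: sub_end_leaf_or_root)
next
  case False
  then obtain z where "sub_end T r {a, b} a = Inr {a, z}"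
    using sub_end_inner[OF False assms] by blast
  then show ?thesis using False by simp
qed

lemma sub_end_eq:
  assumes "a1 \<in> V" "b1 \<in> V" "a1 \<noteq> b1" "a2 \<in> V" "b2 \<in> V" "a2 \<noteq> b2"
    and eq: "sub_end T r {a1, b1} a1 = sub_end T r {a2, b2} a2"
  shows "a1 = a2 \<or> ({a1, a2} \<in> T \<and> \<not> reach (T - {{a1, a2}}) a1 b1 \<and>
    \<not> reach (T - {{a1, a2}}) a2 b2)"
proof (cases "leaf_or_root a1 \<or> leaf_or_root a2")
  case True
  then show ?thesis
    using eq sub_end_eq_Inl_iff assms by (metis sub_end_leaf_or_root)
next
  case False
  then have "\<not> leaf_or_root a1" "\<not> leaf_or_root a2" by simp_all
  obtain z1 where z1: "sub_end T r {a1, b1} a1 = Inr {a1, z1}" "{a1, z1} \<in> T"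
    "\<not> reach (T - {{a1, z1}}) a1 b1"
    using sub_end_inner[OF \<open>\<not> leaf_or_root a1\<close> assms(1-3)] by blast
  obtain z2 where z2: "sub_end T r {a2, b2} a2 = Inr {a2, z2}" "\<not> reach (T - {{a2, z2}}) a2 b2"
    using sub_end_inner[OF \<open>\<not> leaf_or_root a2\<close> assms(4-6)] by blast
  have "{a1, z1} = {a2, z2}" using eq z1(1) z2(1) by simp
  then have "a1 = a2 \<or> z1 = a2 \<and> z2 = a1" by (auto simp: doubleton_eq_iff)
  then show ?thesis using z1 z2 by (auto simp: insert_commute)
qed

lemma sub_link_eq_ordered:
  assumes V: "a1 \<in> V" "b1 \<in> V" "a1 \<noteq> b1" "a2 \<in> V" "b2 \<in> V" "a2 \<noteq> b2"
    and link: "{a1, b1} \<notin> T"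
    and eq_a: "sub_end T r {a1, b1} a1 = sub_end T r {a2, b2} a2"
    and eq_b: "sub_end T r {a1, b1} b1 = sub_end T r {a2, b2} b2"
  shows "{a1, b1} = {a2, b2}"
proof -
  have Ma: "a1 = a2 \<or> ({a1, a2} \<in> T \<and> \<not> reach (T - {{a1, a2}}) a1 b1 \<and>
      \<not> reach (T - {{a1, a2}}) a2 b2)"
    using sub_end_eq[OF V eq_a] .
  have Mb: "b1 = b2 \<or> ({b1, b2} \<in> T \<and> \<not> reach (T - {{b1, b2}}) b1 a1 \<and>
      \<not> reach (T - {{b1, b2}}) b2 a2)"
    using sub_end_eq[of b1 a1 b2 a2] V eq_b by (simp add: insert_commute)
  show ?thesis
  proof (cases "a1 = a2")
    case True
    show ?thesis
    proof (rule ccontr)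
      assume "{a1, b1} \<noteq> {a2, b2}"
      then have "{b1, b2} \<in> T" "\<not> reach (T - {{b1, b2}}) b1 a1" "\<not> reach (T - {{b1, b2}}) b2 a1"
        using Mb True by auto
      then show False using tree_edge_separates V(1,2) by (metis reach_sym)
    qed
  next
    case False
    then have g: "{a1, a2} \<in> T" "\<not> reach (T - {{a1, a2}}) a1 b1" "\<not> reach (T - {{a1, a2}}) a2 b2"
      using Ma by auto
    have "reach (T - {{a1, a2}}) b1 b2"
    proof (cases "b1 = b2")
      case False
      then have "{b1, b2} \<in> T" using Mb by auto
      moreover have "{b1, b2} \<noteq> {a1, a2}"
        using link g(1) V(3) by (auto simp: doubleton_eq_iff insert_commute)
      ultimately show ?thesis by (intro reach_edge) simp
    qed simp
    then show ?thesis
      using tree_edge_separates[OF g(1) V(2,1)] g(2,3) by (metis reach_sym reach_trans)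
  qed
qed

lemma sub_link_inj:
  assumes "l1 \<in> E - T" "l2 \<in> E - T" and eq: "sub_link T r l1 = sub_link T r l2"
  shows "l1 = l2"
proof -
  obtain a1 b1 where ab1: "a1 \<in> V" "b1 \<in> V" "a1 \<noteq> b1" "l1 = {a1, b1}"
    using assms(1) by (blast elim: edge_E)
  obtain a2 b2 where ab2: "a2 \<in> V" "b2 \<in> V" "a2 \<noteq> b2" "l2 = {a2, b2}"
    using assms(2) by (blast elim: edge_E)
  have "{sub_end T r l1 a1, sub_end T r l1 b1} = {sub_end T r l2 a2, sub_end T r l2 b2}"
    using eq ab1 ab2 by (simp add: sub_link_def)
  then consider
      "sub_end T r l1 a1 = sub_end T r l2 a2" "sub_end T r l1 b1 = sub_end T r l2 b2"
    | "sub_end T r l1 a1 = sub_end T r l2 b2" "sub_end T r l1 b1 = sub_end T r l2 a2"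
    by (auto simp: doubleton_eq_iff)
  then show ?thesis
  proof cases
    case 1
    then show ?thesis using sub_link_eq_ordered[of a1 b1 a2 b2] ab1 ab2 assms(1) by simp
  next
    case 2
    then show ?thesis
      using sub_link_eq_ordered[of a1 b1 b2 a2] ab1 ab2 assms(1) by (simp add: insert_commute)
  qed
qed

definition crossing_links :: "'a set \<Rightarrow> 'a \<Rightarrow> 'a set set" where
  "crossing_links e u = {l \<in> E - T. l \<inter> tree_side e u \<noteq> {} \<and> \<not> l \<subseteq> tree_side e u \<and>
     (u \<notin> l \<or> leaf_or_root u)}"

lemma sub_end_in_sub_side:
  assumes e: "e \<in> T" "u \<in> e"
    and ab: "a \<in> V" "b \<in> V" "a \<noteq> b" "a \<in> tree_side e u"
    and u: "a = u \<Longrightarrow> leaf_or_root u"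
  shows "sub_end T r {a, b} a \<in> sub_side e u"
proof (cases "leaf_or_root a")
  case True
  then show ?thesis using ab by (simp add: sub_end_leaf_or_root sub_side_def)
next
  case False
  then obtain z where z: "sub_end T r {a, b} a = Inr {a, z}" "{a, z} \<in> T"
    using ab by (elim sub_end_inner) auto
  obtain x where x: "e = {u, x}" "u \<noteq> x" using other_end e by blast
  have "{a, z} \<noteq> e"
  proof
    assume "{a, z} = e"
    then have "a = u \<or> a = x" using x by (auto simp: doubleton_eq_iff)
    then show False using u False ab(4) other_end_notin_tree_side e x by auto
  qed
  then have "z \<in> tree_side e u" using tree_side_step z(2) ab(4) by blast
  then show ?thesis using z ab(4) by (auto simp: sub_side_def)
qed

lemma sub_end_notin_sub_side:
  assumes "a \<in> V" "b \<in> V" "a \<noteq> b" "a \<notin> tree_side e u"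
  shows "sub_end T r {a, b} a \<notin> sub_side e u"
proof (cases "leaf_or_root a")
  case True
  then show ?thesis using assms by (auto simp: sub_end_leaf_or_root sub_side_def)
next
  case False
  then show ?thesis using assms by (elim sub_end_inner) (auto simp: sub_side_def)
qed

lemma crossing_link_covers:
  assumes e: "e \<in> T" "u \<in> e" and l: "l \<in> crossing_links e u"
  shows "{Inl u, Inr e} \<in> link_path (sub_tree T) (sub_link T r l)"
proof -
  obtain a b where ab: "a \<in> V" "b \<in> V" "a \<noteq> b" "l = {a, b}"
    "a \<in> tree_side e u" "b \<notin> tree_side e u"
    using l unfolding crossing_links_def by (elim CollectE DiffE conjE edge_E) (auto simp: insert_commute)
  let ?sa = "sub_end T r {a, b} a" and ?sb = "sub_end T r {b, a} b"
  have "?sa \<in> sub_side e u"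
    using sub_end_in_sub_side[OF e ab(1-3,5)] l ab(4) by (auto simp: crossing_links_def)
  moreover have "?sb \<notin> sub_side e u"
    using sub_end_notin_sub_side ab by auto
  ultimately have "\<not> reach (sub_tree T - {{Inl u, Inr e}}) ?sa ?sb" "?sa \<noteq> ?sb"
    using sub_side_closed[OF e] by metis+
  moreover have "reach (sub_tree T) ?sa ?sb"
    using ab by (intro reach_sub_tree sub_end_in_sub_vertices) auto
  moreover have "sub_link T r l = {?sa, ?sb}"
    using ab by (simp add: sub_link_def insert_commute)
  moreover have "{Inl u, Inr e} \<in> sub_tree T" using e by (auto simp: sub_tree_def)
  ultimately show ?thesis
    using link_path_eq_separating[OF all_edges_bridges_sub_tree] by simp
qed

end

section \<open>Every edge of the subdivided tree lies on two link paths\<close>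

lemma card_le_card_Un_cover:
  assumes "A \<subseteq> B \<union> C" "finite B" "finite C"
  shows "card A \<le> card B + card C"
  using card_mono[OF _ assms(1)] card_Un_le[of B C] assms(2,3) by (meson finite_UnI le_trans)

locale tree_in_quartic_graph = tree_in_graph +
  assumes regular: "\<forall>v\<in>V. degree E v = 4"
    and four_edge_connected: "k_edge_connected 4 V E"
    and no_degree_4: "\<forall>v\<in>V. degree T v \<noteq> 4"
    and root: "r \<in> V" "degree T r = 1"
begin

lemma finite_crossing_links: "finite (crossing_links e u)"
  using finite_E by (simp add: crossing_links_def)

lemma two_le_card_crossing_links_leaf_or_root:
  assumes e: "{u, x} \<in> T" "u \<noteq> x" and u: "leaf_or_root u"
  shows "2 \<le> card (crossing_links {u, x} u)"
proof -
  let ?S = "tree_side {u, x} u"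
  have "cut_edges E ?S \<subseteq> insert {u, x} (crossing_links {u, x} u)"
    using tree_edge_leaving_side u by (auto simp: cut_edges_def crossing_links_def)
  then have "card (cut_edges E ?S) \<le> Suc (card (crossing_links {u, x} u))"
    using finite_crossing_links by (metis card_insert_if card_mono finite_insert le_SucI)
  moreover have "4 \<le> card (cut_edges E ?S)"
  proof (rule card_cut_edges_ge[OF four_edge_connected])
    have "u \<in> V" "x \<in> V" using e by (auto elim: edge_T simp: doubleton_eq_iff)
    then show "?S \<subseteq> V" "x \<in> V" using tree_side_subset_V by auto
    show "u \<in> ?S" "x \<notin> ?S" using e other_end_notin_tree_side by auto
  qed
  ultimately show ?thesis by simp
qed

lemma other_tree_edge:
  assumes "e \<in> T" "u \<in> e" "degree T u \<noteq> 1"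
  obtains f where "f \<in> T" "u \<in> f" "f \<noteq> e"
proof -
  have "{f \<in> T. u \<in> f} \<noteq> {e}"
  proof
    assume "{f \<in> T. u \<in> f} = {e}"
    then show False using assms(3) by (simp add: degree_def)
  qed
  then show thesis using that assms(1,2) by blast
qed

lemma two_le_card_crossing_links_inner:
  assumes e: "{u, x} \<in> T" "u \<noteq> x" and u: "\<not> leaf_or_root u"
  shows "2 \<le> card (crossing_links {u, x} u)"
proof -
  let ?e = "{u, x}"
  let ?S = "tree_side ?e u" and ?Good = "crossing_links ?e u"
  let ?S' = "?S - {u}" and ?Eu = "{f \<in> E. u \<in> f}"
  have uV: "u \<in> V" and xV: "x \<in> V" and xS: "x \<notin> ?S"
    using e other_end_notin_tree_side by (auto elim: edge_T simp: doubleton_eq_iff)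
  have SV: "?S \<subseteq> V" using tree_side_subset_V[OF uV] .
  obtain f where f: "f \<in> T" "u \<in> f" "f \<noteq> ?e"
    using other_tree_edge[OF e(1)] u by (auto simp: leaf_or_root_def)
  obtain t where t: "f = {u, t}" "u \<noteq> t" using other_end f by blast
  have "t \<in> ?S'" using tree_side_step[of u t] f t by auto
  then have cut_S': "4 \<le> card (cut_edges E ?S')"
    using SV xV xS by (intro card_cut_edges_ge[OF four_edge_connected, of _ t x]) auto
  have cut_S: "4 \<le> card (cut_edges E ?S)"
    using SV xV xS by (intro card_cut_edges_ge[OF four_edge_connected, of _ u x]) auto
  have "cut_edges E ?S \<subseteq> (?Eu \<inter> cut_edges E ?S) \<union> ?Good"
    using tree_edge_leaving_side by (fastforce simp: cut_edges_def crossing_links_def)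
  then have Good_S: "card (cut_edges E ?S) \<le> card (?Eu \<inter> cut_edges E ?S) + card ?Good"
    using finite_E finite_crossing_links by (intro card_le_card_Un_cover) auto
  have "cut_edges E ?S' \<subseteq> (?Eu \<inter> cut_edges E ?S') \<union> ?Good"
    using tree_edge_leaving_side by (fastforce simp: cut_edges_def crossing_links_def)
  then have Good_S': "card (cut_edges E ?S') \<le> card (?Eu \<inter> cut_edges E ?S') + card ?Good"
    using finite_E finite_crossing_links by (intro card_le_card_Un_cover) auto
  have "(?Eu \<inter> cut_edges E ?S) \<inter> (?Eu \<inter> cut_edges E ?S') = {}"
    by (auto simp: cut_edges_def elim!: edge_E)
  then have "card (?Eu \<inter> cut_edges E ?S) + card (?Eu \<inter> cut_edges E ?S') \<le> card ?Eu"
    using finite_E by (subst card_Un_disjoint[symmetric]) (auto intro: card_mono)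
  also have "card ?Eu = 4" using regular uV by (simp add: degree_def)
  finally show ?thesis using cut_S cut_S' Good_S Good_S' by linarith
qed

lemma sub_tree_edge_covered_twice:
  assumes "e' \<in> sub_tree T"
  shows "\<exists>l1' \<in> sub_link T r ` (E - T). \<exists>l2' \<in> sub_link T r ` (E - T).
    l1' \<noteq> l2' \<and> e' \<in> link_path (sub_tree T) l1' \<and> e' \<in> link_path (sub_tree T) l2'"
proof -
  obtain u e where ue: "e' = {Inl u, Inr e}" "e \<in> T" "u \<in> e"
    using assms by (auto simp: sub_tree_def)
  obtain x where x: "e = {u, x}" "u \<noteq> x" using other_end ue by blast
  have "2 \<le> card (crossing_links e u)"
    using two_le_card_crossing_links_leaf_or_root two_le_card_crossing_links_inner ue x by blast
  then obtain l1 l2 where l: "l1 \<in> crossing_links e u" "l2 \<in> crossing_links e u" "l1 \<noteq> l2"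
    using finite_crossing_links
    by (metis One_nat_def card_le_Suc0_iff_eq not_less_eq_eq numeral_2_eq_2)
  then have "l1 \<in> E - T" "l2 \<in> E - T" by (auto simp: crossing_links_def)
  moreover have "sub_link T r l1 \<noteq> sub_link T r l2"
    using sub_link_inj calculation l(3) by blast
  ultimately show ?thesis using crossing_link_covers ue l by blast
qed

section \<open>Two-vertex-connectivity of the tree plus the chosen links\<close>

definition tree_plus :: "('a + 'a set) set set \<Rightarrow> 'a set set" where
  "tree_plus F' = T \<union> {l \<in> E - T. sub_link T r l \<in> F'}"

lemma two_lt_card_V: "2 < card V"
proof -
  have "{e \<in> E. r \<in> e} \<subseteq> (\<lambda>w. {r, w}) ` (V - {r})"
    by (auto elim!: edge_E simp: insert_commute)
  then have "card {e \<in> E. r \<in> e} \<le> card (V - {r})"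
    using finite_V by (meson card_image_le card_mono finite_Diff finite_imageI le_trans)
  also have "\<dots> = card V - 1" using root finite_V by simp
  finally show ?thesis using regular root by (simp add: degree_def)
qed

lemma degree_T_le_3: "v \<in> V \<Longrightarrow> degree T v \<le> 3"
proof -
  assume "v \<in> V"
  moreover have "degree T v \<le> degree E v"
    unfolding degree_def using T_subset_E finite_E by (intro card_mono) auto
  ultimately show ?thesis using regular no_degree_4 by force
qed

text \<open>If the component \<open>C\<close> of \<open>u\<close> in \<open>T + F - v\<close> contains a single tree neighbour \<open>y\<close> of \<open>v\<close>,
  then its lift \<open>C'\<close> to the subdivision is closed in \<open>T' + F'\<close> minus the edge \<open>{v, v\<^sub>e}\<close>,
  \<open>e = vy\<close>, contradicting 2-edge-connectivity.\<close>
context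
  fixes F' :: "('a + 'a set) set set" and v u y :: 'a
  assumes F'_links: "F' \<subseteq> sub_link T r ` (E - T)"
    and two_edge_connected: "k_edge_connected 2 (sub_vertices V T) (sub_tree T \<union> F')"
    and v: "v \<in> V" "\<not> leaf_or_root v" and u: "u \<noteq> v"
    and y: "{v, y} \<in> T" "reach {f \<in> tree_plus F'. v \<notin> f} u y"
    and y_unique: "\<And>z. {v, z} \<in> T \<Longrightarrow> reach {f \<in> tree_plus F'. v \<notin> f} u z \<Longrightarrow> z = y"
begin

abbreviation H :: "'a set set" where
  "H \<equiv> {f \<in> tree_plus F'. v \<notin> f}"

abbreviation C :: "'a set" where
  "C \<equiv> {x. reach H u x}"

abbreviation C' :: "('a + 'a set) set" where
  "C' \<equiv> Inl ` C \<union> Inr ` {f \<in> T. f \<inter> C \<noteq> {}}"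

lemma v_notin_C: "v \<notin> C"
proof
  assume "v \<in> C"
  then have "reach H u v" by simp
  then have "v \<in> - {v}"
    by (rule reach_closed) (use u in auto)
  then show False by simp
qed

lemma C_closed: "p \<in> C \<Longrightarrow> reach H p q \<Longrightarrow> q \<in> C"
  by (auto intro: reach_trans)

lemma tree_edges_avoiding_v: "{f \<in> T. v \<notin> f} \<subseteq> H"
  by (auto simp: tree_plus_def)

lemma sub_end_in_lift:
  assumes "a \<in> V" "b \<in> V" "a \<noteq> b" "a \<in> C"
  shows "sub_end T r {a, b} a \<in> C'"
proof (cases "leaf_or_root a")
  case True
  then show ?thesis using assms(4) by (simp add: sub_end_leaf_or_root)
next
  case False
  then show ?thesis using assms by (elim sub_end_inner) auto
qed

lemma sub_end_at_v:
  assumes "a \<in> V" "a \<in> C"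
  shows "sub_end T r {v, a} v = Inr {v, y}"
proof -
  have "v \<noteq> a" using assms(2) v_notin_C by auto
  then obtain z where z: "sub_end T r {v, a} v = Inr {v, z}" "{v, z} \<in> T"
    "reach {f \<in> T. v \<notin> f} z a"
    using sub_end_inner[OF v(2) v(1) assms(1)] by blast
  have "reach H z a" using z(3) tree_edges_avoiding_v by (rule reach_mono)
  then have "z \<in> C" using C_closed[OF assms(2) reach_sym] by blast
  then have "z = y" using y_unique z(2) by blast
  then show ?thesis using z(1) by simp
qed

text \<open>An edge of \<open>T + F\<close> can leave \<open>C\<close> only at \<open>v\<close>, and the end of its image there is \<open>v\<^sub>e\<close>,
  \<open>e = vy\<close>, which lies in \<open>C'\<close>.\<close>
lemma link_end_in_lift:
  assumes ab: "a \<in> V" "b \<in> V" "a \<noteq> b" "{a, b} \<in> tree_plus F'"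
    and a: "sub_end T r {a, b} a \<in> C'"
  shows "sub_end T r {b, a} b \<in> C'"
proof (cases "a \<in> C")
  case True
  show ?thesis
  proof (cases "b = v")
    case True
    then show ?thesis using sub_end_at_v[OF ab(1) \<open>a \<in> C\<close>] y by auto
  next
    case False
    have "a \<noteq> v" using \<open>a \<in> C\<close> v_notin_C by auto
    then have "reach H a b" using ab(4) False by (intro reach_edge) simp
    then have "b \<in> C" using C_closed \<open>a \<in> C\<close> by blast
    then show ?thesis using sub_end_in_lift ab(1-3) by simp
  qed
next
  case False
  then have "\<not> leaf_or_root a" using a by (auto simp: sub_end_leaf_or_root)
  then obtain z where z: "sub_end T r {a, b} a = Inr {a, z}" "{a, z} \<in> T"
    "reach {f \<in> T. a \<notin> f} z b"
    using sub_end_inner[OF _ ab(1-3)] by blast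
  have "z \<in> C" using z(1,2) a False by auto
  have "a = v"
  proof (rule ccontr)
    assume "a \<noteq> v"
    moreover have "z \<noteq> v" using \<open>z \<in> C\<close> v_notin_C by auto
    ultimately have "reach H z a"
      using z(2) by (intro reach_edge) (auto simp: tree_plus_def insert_commute)
    then show False using C_closed \<open>z \<in> C\<close> False by blast
  qed
  then have "reach H z b" using z(3) tree_edges_avoiding_v by (simp add: reach_mono)
  then have "b \<in> C" using C_closed \<open>z \<in> C\<close> by blast
  then show ?thesis using sub_end_in_lift ab(1-3) by simp
qed

lemma lift_closed_sub_tree:
  assumes "A \<in> C'" "{A, B} \<in> sub_tree T" "{A, B} \<noteq> {Inl v, Inr {v, y}}"
  shows "B \<in> C'"
proof -
  obtain s f where sf: "f \<in> T" "s \<in> f" "(A = Inl s \<and> B = Inr f) \<or> (A = Inr f \<and> B = Inl s)"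
    using assms(2) sub_tree_edge_iff by blast
  from sf(3) show ?thesis
  proof
    assume "A = Inl s \<and> B = Inr f"
    then show ?thesis using assms(1) sf by auto
  next
    assume AB: "A = Inr f \<and> B = Inl s"
    obtain t where t: "f = {s, t}" "s \<noteq> t" using other_end sf by blast
    show ?thesis
    proof (rule ccontr)
      assume "B \<notin> C'"
      then have "s \<notin> C" "t \<in> C" using AB assms(1) t by auto
      show False
      proof (cases "s = v")
        case True
        then have "t = y" using y_unique sf(1) t(1) \<open>t \<in> C\<close> by auto
        then show False using assms(3) AB True t(1) by auto
      next
        case False
        then have "f \<in> H" using \<open>t \<in> C\<close> v_notin_C sf(1) t(1) by (auto simp: tree_plus_def)
        then have "reach H t s" using t(1) by (metis insert_commute reach_edge)
        then show False using C_closed \<open>t \<in> C\<close> \<open>s \<notin> C\<close> by blast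
      qed
    qed
  qed
qed

lemma lift_closed_link:
  assumes "A \<in> C'" "{A, B} \<in> F'"
  shows "B \<in> C'"
proof -
  obtain l where l: "l \<in> E - T" "{A, B} = sub_link T r l" using F'_links assms(2) by blast
  then obtain a b where ab: "a \<in> V" "b \<in> V" "a \<noteq> b" "l = {a, b}" by (blast elim: edge_E)
  have ab_plus: "{a, b} \<in> tree_plus F'" "{b, a} \<in> tree_plus F'"
    using l ab(4) assms(2) by (auto simp: tree_plus_def insert_commute)
  have "{A, B} = {sub_end T r {a, b} a, sub_end T r {b, a} b}"
    using l ab(4) by (simp add: sub_link_def insert_commute)
  then consider "A = sub_end T r {a, b} a" "B = sub_end T r {b, a} b"
    | "A = sub_end T r {b, a} b" "B = sub_end T r {a, b} a"
    by (auto simp: doubleton_eq_iff)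
  then show ?thesis
  proof cases
    case 1
    then show ?thesis using link_end_in_lift[OF ab(1-3) ab_plus(1)] assms(1) by simp
  next
    case 2
    then show ?thesis using link_end_in_lift[OF ab(2,1) _ ab_plus(2)] ab(3) assms(1) by simp
  qed
qed

lemma unique_tree_neighbour_contradiction: False
proof -
  let ?D = "{{Inl v, Inr {v, y}}}"
  let ?R = "(sub_tree T \<union> F') - ?D"
  have "?D \<subseteq> sub_tree T \<union> F'" using y(1) by (auto simp: sub_tree_def)
  then have "connected_graph (sub_vertices V T) ?R"
    using two_edge_connected unfolding k_edge_connected_def by simp
  moreover have "Inr {v, y} \<in> sub_vertices V T" "Inl v \<in> sub_vertices V T"
    using y(1) v(1) by (auto simp: sub_vertices_def)
  ultimately have "reach {e \<in> ?R. e \<subseteq> sub_vertices V T} (Inr {v, y}) (Inl v)"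
    by (simp add: connected_graph_iff_reach)
  then have "reach ?R (Inr {v, y}) (Inl v)" by (rule reach_mono) auto
  moreover have "Inr {v, y} \<in> C'" using y by auto
  moreover have "B \<in> C'" if "A \<in> C'" "{A, B} \<in> ?R" for A B
    using that lift_closed_sub_tree[of A B] lift_closed_link[of A B] by blast
  ultimately have "Inl v \<in> C'" by (rule reach_closed)
  then show False using v_notin_C by auto
qed

end

lemma two_le_card_component_tree_neighbours:
  assumes F'_links: "F' \<subseteq> sub_link T r ` (E - T)"
    and two_edge_connected: "k_edge_connected 2 (sub_vertices V T) (sub_tree T \<union> F')"
    and v: "v \<in> V" "\<not> leaf_or_root v" and u: "u \<in> V" "u \<noteq> v"
  shows "2 \<le> card {z. {v, z} \<in> T \<and> reach {f \<in> tree_plus F'. v \<notin> f} u z}"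
proof (rule ccontr)
  let ?N = "{z. {v, z} \<in> T \<and> reach {f \<in> tree_plus F'. v \<notin> f} u z}"
  assume "\<not> 2 \<le> card ?N"
  then have "card ?N \<le> Suc 0" by simp
  moreover have "finite ?N" using finite_tree_neighbours[of v] by (rule rev_finite_subset) auto
  moreover obtain z where "{v, z} \<in> T" "reach {f \<in> T. v \<notin> f} u z"
    using tree_neighbour_reach[OF v(1) u] by blast
  then have "z \<in> ?N" by (auto simp: tree_plus_def elim: reach_mono)
  ultimately have "?N = {z}" using card_le_Suc0_iff_eq by blast
  show False
  proof (rule unique_tree_neighbour_contradiction[OF F'_links two_edge_connected v u(2)])
    show "{v, z} \<in> T" "reach {f \<in> tree_plus F'. v \<notin> f} u z" using \<open>z \<in> ?N\<close> by auto
    show "z' = z" if "{v, z'} \<in> T" "reach {f \<in> tree_plus F'. v \<notin> f} u z'" for z'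
      using that \<open>?N = {z}\<close> by blast
  qed
qed

lemma reach_avoiding_vertex:
  assumes F'_links: "F' \<subseteq> sub_link T r ` (E - T)"
    and two_edge_connected: "k_edge_connected 2 (sub_vertices V T) (sub_tree T \<union> F')"
    and v: "v \<in> V" and uw: "u \<in> V" "u \<noteq> v" "w \<in> V" "w \<noteq> v"
  shows "reach {f \<in> tree_plus F'. v \<notin> f} u w"
proof (rule ccontr)
  let ?H = "{f \<in> tree_plus F'. v \<notin> f}"
  let ?N = "\<lambda>x. {z. {v, z} \<in> T \<and> reach ?H x z}"
  assume "\<not> reach ?H u w"
  then have "?N u \<inter> ?N w = {}" by (auto dest: reach_sym intro: reach_trans)
  then have "card (?N u) + card (?N w) \<le> card {z. {v, z} \<in> T}"
    using finite_tree_neighbours[of v]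
    by (subst card_Un_disjoint[symmetric]) (auto intro: card_mono rev_finite_subset)
  also have "\<dots> \<le> degree T v" by (rule card_tree_neighbours_le_degree)
  finally have sum: "card (?N u) + card (?N w) \<le> degree T v" .
  have nonempty: "1 \<le> card (?N x)" if x: "x \<in> V" "x \<noteq> v" for x
  proof -
    obtain z where "{v, z} \<in> T" "reach {f \<in> T. v \<notin> f} x z"
      using tree_neighbour_reach[OF v x] by blast
    then have "z \<in> ?N x" by (auto simp: tree_plus_def elim: reach_mono)
    then show ?thesis
      using finite_tree_neighbours[of v] by (auto simp: Suc_le_eq card_gt_0_iff elim: rev_finite_subset)
  qed
  show False
  proof (cases "leaf_or_root v")
    case True
    then have "degree T v = 1" using root by (auto simp: leaf_or_root_def)
    then show False using sum nonempty[OF uw(1,2)] nonempty[OF uw(3,4)] by linarith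
  next
    case False
    note two_le = two_le_card_component_tree_neighbours[OF F'_links two_edge_connected v False]
    show False using sum degree_T_le_3[OF v] two_le[OF uw(1,2)] two_le[OF uw(3,4)] by linarith
  qed
qed

lemma connected_tree_plus_minus_vertex:
  assumes "F' \<subseteq> sub_link T r ` (E - T)"
    and "k_edge_connected 2 (sub_vertices V T) (sub_tree T \<union> F')" and "v \<in> V"
  shows "connected_graph (V - {v}) {e \<in> tree_plus F'. e \<inter> {v} = {}}"
proof -
  have "tree_plus F' \<subseteq> E" using T_subset_E by (auto simp: tree_plus_def)
  then have "{e \<in> {e \<in> tree_plus F'. e \<inter> {v} = {}}. e \<subseteq> V - {v}} = {f \<in> tree_plus F'. v \<notin> f}"
    using edge_subset_V by auto
  then show ?thesis
    using reach_avoiding_vertex[OF assms] by (simp add: connected_graph_iff_reach)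
qed

lemma tree_plus_two_vertex_connected:
  assumes "F' \<subseteq> sub_link T r ` (E - T)"
    and "k_edge_connected 2 (sub_vertices V T) (sub_tree T \<union> F')"
  shows "k_vertex_connected 2 V (tree_plus F')"
  unfolding k_vertex_connected_def
proof (intro conjI allI impI)
  fix X assume X: "X \<subseteq> V" "card X < 2"
  then have "X = {} \<or> (\<exists>v. X = {v})"
    using finite_V by (metis One_nat_def card_0_eq card_1_singletonE finite_subset less_2_cases)
  then show "connected_graph (V - X) {e \<in> tree_plus F'. e \<inter> X = {}}"
  proof
    assume "X = {}"
    have "reach {e \<in> tree_plus F'. e \<subseteq> V} a b" if "a \<in> V" "b \<in> V" for a b
      using reach_T[OF that] T_subset_E edge_subset_V by (auto simp: tree_plus_def elim!: reach_mono)
    then show ?thesis using \<open>X = {}\<close> by (simp add: connected_graph_iff_reach)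
  next
    assume "\<exists>v. X = {v}"
    then show ?thesis using connected_tree_plus_minus_vertex[OF assms] X(1) by auto
  qed
qed (rule two_lt_card_V)

end

theorem lemma15:
  fixes V :: "'a set" and E T :: "'a set set" and r :: 'a
  assumes G: "graph V E"
    and reg: "\<forall>v\<in>V. degree E v = 4"
    and conn: "k_edge_connected 4 V E"
    and tree: "spanning_tree V E T"
    and nodeg4: "\<forall>v\<in>V. degree T v \<noteq> 4"
    and root: "r \<in> V" "degree T r = 1"
  shows "(\<forall>F' \<subseteq> sub_link T r ` (E - T).
            k_edge_connected 2 (sub_vertices V T) (sub_tree T \<union> F') \<longrightarrow>
            k_vertex_connected 2 V (T \<union> {l \<in> E - T. sub_link T r l \<in> F'}))
       \<and> (\<forall>e' \<in> sub_tree T. \<exists>l1' \<in> sub_link T r ` (E - T). \<exists>l2' \<in> sub_link T r ` (E - T).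
            l1' \<noteq> l2' \<and> e' \<in> link_path (sub_tree T) l1' \<and> e' \<in> link_path (sub_tree T) l2')"
proof -
  interpret tree_in_quartic_graph V E T r
    using assms by unfold_locales
  show ?thesis
    using tree_plus_two_vertex_connected sub_tree_edge_covered_twice by (auto simp: tree_plus_def)
qed

end
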